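(* Let $\mu\in\mathcal{P}(\mathbb{R})$ and let $F_n:\mathbb{R}\to\mathbb{R}^d$, $n\ge1$, be Borel functions such that the family of pushforward measures $((F_n)_*\mu)_{n\ge1}$ is tight. Then, after passing to a subsequence, there exists a Borel function $F:\mathbb{R}\to\mathbb{R}^d$ such that $(F_n)_*\mu\to F_*\mu$ weakly.
   Context: $(F)_*\mu(A)=\mu(F^{-1}(A))$ denotes the pushforward measure. Weak convergence is with respect to bounded continuous functions. *)

theory Defs
  imports "HOL-Probability.Probability"
begin

definition tight_seq :: "(nat \<Rightarrow> 'a::topological_space measure) \<Rightarrow> bool" where
  "tight_seq M \<longleftrightarrow>
     (\<forall>\<epsilon>>0. \<exists>K. compact K \<and> (\<forall>n. measure (M n) (space (M n) - K) < \<epsilon>))"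

definition weak_conv_seq :: "(nat \<Rightarrow> 'a::topological_space measure) \<Rightarrow> 'a measure \<Rightarrow> bool" where
  "weak_conv_seq M N \<longleftrightarrow>
     (\<forall>f :: 'a \<Rightarrow> real. continuous_on UNIV f \<and> bounded (range f) \<longrightarrow>
        (\<lambda>n. \<integral>x. f x \<partial>M n) \<longlonglongrightarrow> (\<integral>x. f x \<partial>N))"

end

theory Submission
  imports Defs "HOL-Library.Cardinality" "HOL-Library.Diagonal_Subsequence"
begin

text \<open>
  Split \<open>\<mu>\<close> into its countably many atoms and its diffuse part. At an atom \<open>a\<close>, tightness
  bounds the values \<open>F\<^sub>n a\<close>, so a diagonal subsequence converges at every atom, and \<open>F\<close> is the
  pointwise limit there. For the diffuse part, push \<open>F\<^sub>n\<close> into the open unit cube by a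
  homeomorphism and record, for every dyadic level \<open>k\<close> and cell \<open>m\<close>, the mass that
  \<open>F\<^sub>n\<close> sends to the cell; a second diagonal subsequence makes all these masses converge.
  Indexing the cells so that refinement preserves their order, the limit masses cut the range
  of the distribution function \<open>G\<close> of \<open>\<mu>\<close> into nested intervals, and off the atoms
  \<open>F = \<Phi> \<circ> G\<close>, where \<open>\<Phi> u\<close> is the limit of the cells whose intervals contain \<open>u\<close>. As \<open>G\<close>
  is uniformly distributed under the diffuse part, \<open>F\<close> gives every cell its limit mass.
  Tightness keeps the mass away from the boundary of the cube, uniformly in \<open>n\<close>, so that the
  cell masses determine the limits of integrals of bounded continuous functions.
\<close>

lemma bounded_seqs_common_convergent_subseq:
  fixes x :: "nat \<Rightarrow> nat \<Rightarrow> 'a::heine_borel"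
  assumes bnd: "\<And>j. bounded (range (x j))"
  shows "\<exists>r. strict_mono r \<and> (\<forall>j. convergent (\<lambda>n. x j (r n)))"
proof -
  let ?P = "\<lambda>j s. convergent (\<lambda>n. x j (s n))"
  interpret nat: subseqs ?P
  proof (unfold subseqs_def, intro allI impI)
    fix j :: nat and s :: "nat \<Rightarrow> nat" assume s: "strict_mono s"
    have "bounded (range (\<lambda>n. x j (s n)))"
      using bnd[of j] by (rule bounded_subset) auto
    then obtain l r where "strict_mono r" "((\<lambda>n. x j (s n)) \<circ> r) \<longlonglongrightarrow> l"
      using bounded_imp_convergent_subsequence by blast
    then show "\<exists>r'. strict_mono r' \<and> ?P j (s \<circ> r')"
      by (auto simp: convergent_def o_def)
  qed
  have "?P j nat.diagseq" for j
  proof -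
    have "?P j (nat.diagseq \<circ> ((+) (Suc j)))"
    proof (rule nat.diagseq_holds)
      fix r s n assume "strict_mono (r::nat\<Rightarrow>nat)" "?P n s"
      then show "?P n (s \<circ> r)"
        using convergent_subseq_convergent[of "\<lambda>i. x n (s i)" r] by (simp add: o_def)
    qed
    then obtain L where "(\<lambda>n. x j (nat.diagseq (n + Suc j))) \<longlonglongrightarrow> L"
      by (auto simp: convergent_def o_def add.commute)
    then show ?thesis
      using LIMSEQ_offset convergent_def by blast
  qed
  then show ?thesis using nat.subseq_diagseq by blast
qed

lemma countable_bounded_common_convergent_subseq:
  fixes f :: "nat \<Rightarrow> 'a \<Rightarrow> 'b::heine_borel"
  assumes "countable A" and "\<And>a. a \<in> A \<Longrightarrow> bounded (range (\<lambda>n. f n a))"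
  shows "\<exists>r. strict_mono r \<and> (\<forall>a\<in>A. convergent (\<lambda>n. f (r n) a))"
proof (cases "A = {}")
  case True
  then show ?thesis using strict_mono_id by blast
next
  case False
  have "bounded (range (\<lambda>n. f n (from_nat_into A j)))" for j
    by (rule assms(2)[OF from_nat_into[OF False]])
  then obtain r where r: "strict_mono r" "\<And>j. convergent (\<lambda>n. f (r n) (from_nat_into A j))"
    using bounded_seqs_common_convergent_subseq[of "\<lambda>j n. f n (from_nat_into A j)"] by blast
  have "convergent (\<lambda>n. f (r n) a)" if a: "a \<in> A" for a
  proof -
    obtain j where "from_nat_into A j = a" using from_nat_into_surj[OF assms(1) a] by blast
    then show ?thesis using r(2)[of j] by simp
  qed
  then show ?thesis using r(1) by blast
qed

lemma LIMSEQ_by_approximation: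
  fixes a :: "nat \<Rightarrow> real"
  assumes "\<And>\<epsilon>. \<epsilon> > 0 \<Longrightarrow> \<exists>a' b'. a' \<longlonglongrightarrow> b' \<and> (\<forall>n. \<bar>a n - a' n\<bar> \<le> \<epsilon>) \<and> \<bar>b - b'\<bar> \<le> \<epsilon>"
  shows "a \<longlonglongrightarrow> b"
proof (rule LIMSEQ_I)
  fix r :: real assume "0 < r"
  then obtain a' b' where a': "a' \<longlonglongrightarrow> b'" "\<And>n. \<bar>a n - a' n\<bar> \<le> r/3" "\<bar>b - b'\<bar> \<le> r/3"
    using assms[of "r/3"] by auto
  obtain N where N: "\<And>n. n \<ge> N \<Longrightarrow> \<bar>a' n - b'\<bar> < r/3"
    using LIMSEQ_D[OF a'(1), of "r/3"] \<open>0 < r\<close> by auto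
  have "norm (a n - b) < r" if "n \<ge> N" for n
    using N[OF that] a'(2)[of n] a'(3) unfolding real_norm_def abs_le_iff abs_less_iff by linarith
  then show "\<exists>N. \<forall>n\<ge>N. norm (a n - b) < r" by blast
qed

context finite_measure
begin

lemma measure_vimage_eq_sum:
  assumes f: "f \<in> measurable M (count_space UNIV)" and "finite S"
  shows "measure M {x\<in>space M. f x \<in> S} = (\<Sum>m\<in>S. measure M {x\<in>space M. f x = m})"
proof -
  have "{x\<in>space M. f x \<in> S} = (\<Union>m\<in>S. {x\<in>space M. f x = m})" by auto
  moreover have "{x\<in>space M. f x = m} \<in> sets M" for m
    using measurable_sets[OF f, of "{m}"] by (simp add: vimage_def Int_def conj_commute)
  ultimately show ?thesis
    using \<open>finite S\<close> by (auto intro!: finite_measure_finite_Union simp: disjoint_family_on_def)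
qed

lemma integral_finite_valued:
  fixes a :: "'b \<Rightarrow> real"
  assumes \<phi>: "\<phi> \<in> measurable M (count_space UNIV)" and S: "finite S"
  shows "(\<integral>x. (if \<phi> x \<in> S then a (\<phi> x) else 0) \<partial>M) =
    (\<Sum>m\<in>S. a m * measure M {x\<in>space M. \<phi> x = m})"
proof -
  have sets: "{x\<in>space M. \<phi> x = m} \<in> sets M" for m
    using measurable_sets[OF \<phi>, of "{m}"] by (simp add: vimage_def Int_def conj_commute)
  have "(\<integral>x. (if \<phi> x \<in> S then a (\<phi> x) else 0) \<partial>M) =
      (\<integral>x. (\<Sum>m\<in>S. a m * indicator {x\<in>space M. \<phi> x = m} x) \<partial>M)"
    using S by (intro Bochner_Integration.integral_cong) (auto simp: indicator_def)
  also have "\<dots> = (\<Sum>m\<in>S. (\<integral>x. a m * indicator {x\<in>space M. \<phi> x = m} x \<partial>M))"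
    by (rule Bochner_Integration.integral_sum)
       (auto intro: sets simp: emeasure_eq_measure)
  also have "\<dots> = (\<Sum>m\<in>S. a m * measure M {x\<in>space M. \<phi> x = m})"
    using sets by (simp add: Int_absorb2 sets.sets_into_space)
  finally show ?thesis .
qed

lemma abs_integral_diff_le:
  fixes f s :: "'a \<Rightarrow> real"
  assumes [measurable]: "f \<in> borel_measurable M" "s \<in> borel_measurable M"
    and "\<And>x. \<bar>f x\<bar> \<le> B" "\<And>x. \<bar>s x\<bar> \<le> B" and A: "A \<in> sets M"
    and pointwise: "\<And>x. \<bar>f x - s x\<bar> \<le> e + C * indicator A x"
  shows "\<bar>(\<integral>x. f x \<partial>M) - (\<integral>x. s x \<partial>M)\<bar> \<le> e * measure M (space M) + C * measure M A"
proof -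
  have int: "integrable M f" "integrable M s" "integrable M (\<lambda>x. e + C * indicator A x)"
    using assms by (auto intro!: integrable_const_bound[of _ B] simp: emeasure_eq_measure)
  then have "\<bar>(\<integral>x. f x \<partial>M) - (\<integral>x. s x \<partial>M)\<bar> = \<bar>\<integral>x. f x - s x \<partial>M\<bar>"
    by simp
  also have "\<dots> \<le> (\<integral>x. \<bar>f x - s x\<bar> \<partial>M)"
    using integral_norm_bound[of M "\<lambda>x. f x - s x"] by simp
  also have "\<dots> \<le> (\<integral>x. e + C * indicator A x \<partial>M)"
    by (intro integral_mono) (use int pointwise in auto)
  also have "\<dots> = e * measure M (space M) + C * measure M A"
    by (subst Bochner_Integration.integral_add) (use A in \<open>auto simp: emeasure_eq_measure\<close>)
  finally show ?thesis .
qed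

end

section \<open>Dyadic cells of the unit cube\<close>

definition orthant_code :: "('d::finite \<Rightarrow> bool) \<Rightarrow> nat" where
  "orthant_code = (SOME f. bij_betw f UNIV {0..<2^CARD('d)})"

lemma orthant_code_bij:
  "bij_betw (orthant_code :: ('d::finite \<Rightarrow> bool) \<Rightarrow> nat) UNIV {0..<2^CARD('d)}"
proof -
  have "card (UNIV :: ('d \<Rightarrow> bool) set) = 2^CARD('d)"
    using card_fun[where 'a='d and 'b=bool] by simp
  then have "\<exists>f :: ('d \<Rightarrow> bool) \<Rightarrow> nat. bij_betw f UNIV {0..<2^CARD('d)}"
    using ex_bij_betw_finite_nat[of "UNIV :: ('d \<Rightarrow> bool) set"] by auto
  then show ?thesis unfolding orthant_code_def by (rule someI_ex)
qed

lemma orthant_code_less: "orthant_code (b :: 'd::finite \<Rightarrow> bool) < 2^CARD('d)"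
  using orthant_code_bij[where 'd='d] by (auto simp: bij_betw_def)

lemma orthant_code_inject: "orthant_code (a :: 'd::finite \<Rightarrow> bool) = orthant_code b \<longleftrightarrow> a = b"
  using orthant_code_bij[where 'd='d] by (auto simp: bij_betw_def inj_on_def)

text \<open>Base-\<open>2^d\<close> digits of the cell index record, level by level, in which half of its
  parent cell a point lies in each coordinate. Hence the cells of level \<open>j \<ge> k\<close> inside a
  cell of level \<open>k\<close> form a block of consecutive indices.\<close>

primrec dyadic_cell :: "nat \<Rightarrow> real^'d::finite \<Rightarrow> nat" where
  "dyadic_cell 0 y = 0"
| "dyadic_cell (Suc k) y =
     2^CARD('d) * dyadic_cell k y + orthant_code (\<lambda>i. odd \<lfloor>2^Suc k * y$i\<rfloor>)"

lemma dyadic_cell_less: "dyadic_cell k (y :: real^'d::finite) < 2^(CARD('d)*k)"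
proof (induction k)
  case (Suc k)
  have "dyadic_cell (Suc k) y < 2^CARD('d) * (dyadic_cell k y + 1)"
    using orthant_code_less[where 'd='d] by simp
  also have "\<dots> \<le> 2^CARD('d) * 2^(CARD('d)*k)"
    using Suc by (intro mult_left_mono) auto
  finally show ?case by (simp add: power_add[symmetric])
qed simp

lemma dyadic_cell_div:
  "k \<le> j \<Longrightarrow> dyadic_cell j (y :: real^'d::finite) div 2^(CARD('d)*(j-k)) = dyadic_cell k y"
proof (induction j)
  case (Suc j)
  show ?case
  proof (cases "k = Suc j")
    case False
    then have kj: "k \<le> j" using Suc by simp
    then have "Suc j - k = Suc (j - k)" by simp
    then have "dyadic_cell (Suc j) y div 2^(CARD('d)*(Suc j-k)) =
        dyadic_cell (Suc j) y div 2^CARD('d) div 2^(CARD('d)*(j-k))"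
      by (simp add: div_mult2_eq power_add)
    also have "\<dots> = dyadic_cell k y"
      using orthant_code_less[where 'd='d] Suc.IH[OF kj] by simp
    finally show ?thesis .
  qed simp
qed simp

lemma floor_double_eq:
  "\<lfloor>2 * x\<rfloor> = 2 * \<lfloor>x :: real\<rfloor> + (if odd \<lfloor>2*x\<rfloor> then 1 else 0)"
proof -
  have "2 * \<lfloor>x\<rfloor> \<le> \<lfloor>2*x\<rfloor>" "\<lfloor>2*x\<rfloor> < 2 * \<lfloor>x\<rfloor> + 2"
    unfolding le_floor_iff floor_less_iff using floor_correct[of x] by linarith+
  then show ?thesis by presburger
qed

lemma dyadic_cell_eq_imp_floor_eq:
  assumes "dyadic_cell k y = dyadic_cell k (z :: real^'d::finite)"
    and "\<forall>i. 0 \<le> y$i \<and> y$i < 1" "\<forall>i. 0 \<le> z$i \<and> z$i < 1"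
  shows "\<lfloor>2^k * y$i\<rfloor> = \<lfloor>2^k * z$i\<rfloor>"
  using assms(1)
proof (induction k arbitrary: i)
  case 0
  have "\<lfloor>y$i\<rfloor> = 0" "\<lfloor>z$i\<rfloor> = 0" using assms(2,3) by (auto simp: floor_eq_iff)
  then show ?case by simp
next
  case (Suc k)
  have "dyadic_cell k y = dyadic_cell k z"
    using dyadic_cell_div[of k "Suc k" y] dyadic_cell_div[of k "Suc k" z] Suc.prems
    by (simp del: dyadic_cell.simps)
  then have ih: "\<lfloor>2 * (2^k * y$i)\<rfloor> - 2 * \<lfloor>2^k * y$i\<rfloor> = \<lfloor>2 * (2^k * z$i)\<rfloor> - 2 * \<lfloor>2^k * z$i\<rfloor>
      \<Longrightarrow> \<lfloor>2 * (2^k * y$i)\<rfloor> = \<lfloor>2 * (2^k * z$i)\<rfloor>"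
    using Suc.IH by auto
  have "dyadic_cell (Suc k) y mod 2^CARD('d) = dyadic_cell (Suc k) z mod 2^CARD('d)"
    using Suc.prems by simp
  then have "odd \<lfloor>2 * (2^k * y$i)\<rfloor> = odd \<lfloor>2 * (2^k * z$i)\<rfloor>"
    using orthant_code_less[where 'd='d] by (simp add: orthant_code_inject fun_eq_iff mult.assoc)
  then show ?case
    using ih floor_double_eq[of "2^k * y$i"] floor_double_eq[of "2^k * z$i"]
    by (simp add: mult.assoc)
qed

lemma abs_diff_less_if_floor_eq:
  assumes "\<lfloor>2^k * a\<rfloor> = \<lfloor>2^k * (b::real)\<rfloor>"
  shows "\<bar>a - b\<bar> < 1 / 2^k"
proof -
  have "2^k * a - 2^k * b < 1" "2^k * b - 2^k * a < 1"
    using floor_correct[of "2^k * a"] floor_correct[of "2^k * b"] assms by linarith+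
  then have "2^k * \<bar>a - b\<bar> < 1" by (auto simp: abs_if right_diff_distrib)
  then show ?thesis by (simp add: field_simps)
qed

lemma dyadic_cell_eq_imp_close:
  assumes "dyadic_cell k y = dyadic_cell k (z :: real^'d::finite)"
    and "\<forall>i. 0 \<le> y$i \<and> y$i < 1" "\<forall>i. 0 \<le> z$i \<and> z$i < 1"
  shows "\<bar>y$i - z$i\<bar> < 1 / 2^k"
  by (rule abs_diff_less_if_floor_eq, rule dyadic_cell_eq_imp_floor_eq[OF assms])

lemma measurable_dyadic_cell[measurable]: "dyadic_cell k \<in> measurable borel (count_space UNIV)"
proof (induction k)
  case (Suc k)
  have "(\<lambda>y::real^'a. \<lambda>i. odd \<lfloor>2^Suc k * y$i\<rfloor>) \<in> measurable borel (count_space UNIV)"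
    unfolding measurable_count_space_eq2_countable
  proof safe
    fix b :: "'a \<Rightarrow> bool"
    have "(\<lambda>y::real^'a. \<lambda>i. odd \<lfloor>2^Suc k * y$i\<rfloor>) -` {b} \<inter> space borel =
        (\<Inter>i. {y. odd \<lfloor>2^Suc k * y$i\<rfloor> = b i})"
      by auto
    also have "\<dots> \<in> sets borel" by measurable
    finally show "(\<lambda>y::real^'a. \<lambda>i. odd \<lfloor>2^Suc k * y$i\<rfloor>) -` {b} \<inter> space borel \<in> sets borel" .
  qed auto
  then have "(\<lambda>y::real^'a. 2^CARD('a) * j + orthant_code (\<lambda>i. odd \<lfloor>2^Suc k * y$i\<rfloor>))
      \<in> measurable borel (count_space UNIV)" for j
    by (rule measurable_compose) simp
  from measurable_compose_countable[OF this Suc] show ?case by simp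
qed simp

lemma inverse_pow2_less_ex: "0 < (t::real) \<Longrightarrow> \<exists>k. 1/2^k < t"
  using real_arch_pow_inv[of t "1/2"] by (auto simp: power_one_over)

lemma dist_le_CARD_mult:
  fixes x y :: "real^'d::finite"
  assumes "\<And>i. \<bar>x$i - y$i\<bar> \<le> e"
  shows "dist x y \<le> real CARD('d) * e"
proof -
  have "dist x y \<le> (\<Sum>i\<in>UNIV. \<bar>(x - y)$i\<bar>)"
    unfolding dist_norm by (rule norm_le_l1_cart)
  also have "\<dots> \<le> (\<Sum>i\<in>(UNIV::'d set). e)" using assms by (intro sum_mono) simp
  finally show ?thesis by simp
qed

lemma Cauchy_if_dyadic_close:
  fixes c :: "nat \<Rightarrow> real^'d::finite"
  assumes close: "\<And>k j i. k \<le> j \<Longrightarrow> \<bar>c j $ i - c k $ i\<bar> < 1/2^k"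
  shows "Cauchy c"
proof (rule metric_CauchyI)
  fix e :: real assume "0 < e"
  then have "0 < e / (2 * CARD('d))" by simp
  then obtain K where K: "1/2^K < e / (2 * CARD('d))"
    using inverse_pow2_less_ex by blast
  have "CARD('d) * (1/2^K) < CARD('d) * (e / (2 * CARD('d)))"
    by (rule mult_strict_left_mono[OF K]) simp
  also have "\<dots> = e/2" by simp
  finally have "CARD('d) * (1/2^K) < e/2" .
  moreover have "dist (c n) (c K) \<le> CARD('d) * (1/2^K)" if "K \<le> n" for n
    using close[OF that] by (intro dist_le_CARD_mult less_imp_le)
  ultimately have half: "dist (c n) (c K) < e/2" if "K \<le> n" for n
    using that by (meson order.strict_trans1)
  have "dist (c m) (c n) < e" if "K \<le> m" "K \<le> n" for m n
    using dist_triangle2[of "c m" "c n" "c K"] half[OF that(1)] half[OF that(2)] by linarith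
  then show "\<exists>K. \<forall>m\<ge>K. \<forall>n\<ge>K. dist (c m) (c n) < e" by blast
qed

definition unit_cube :: "(real^'d::finite) set" where
  "unit_cube = {y. \<forall>i. 0 < y$i \<and> y$i < 1}"

definition inner_cube :: "real \<Rightarrow> (real^'d::finite) set" where
  "inner_cube \<delta> = {y. \<forall>i. \<delta> \<le> y$i \<and> y$i \<le> 1 - \<delta>}"

lemma unit_cube_eq_box: "unit_cube = box (0::real^'d::finite) 1"
  unfolding unit_cube_def by (auto simp: mem_box_cart)

lemma inner_cube_eq_cbox: "inner_cube \<delta> = cbox (\<chi> i. \<delta>) (\<chi> i. 1 - \<delta> :: real^'d::finite)"
  unfolding inner_cube_def by (auto simp: mem_box_cart)

lemma inner_cube_subset_unit_cube:
  assumes "0 < \<delta>" shows "inner_cube \<delta> \<subseteq> (unit_cube :: (real^'d::finite) set)"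
proof
  fix y :: "real^'d" assume "y \<in> inner_cube \<delta>"
  then have "\<delta> \<le> y$i \<and> y$i \<le> 1 - \<delta>" for i by (simp add: inner_cube_def)
  then have "0 < y$i \<and> y$i < 1" for i using assms by (smt (verit))
  then show "y \<in> unit_cube" by (simp add: unit_cube_def)
qed

lemma unit_cube_half_open: "y \<in> unit_cube \<Longrightarrow> \<forall>i. 0 \<le> y$i \<and> y$i < 1"
  unfolding unit_cube_def by (simp add: order.strict_implies_order)

definition cell_point :: "nat \<Rightarrow> nat \<Rightarrow> real^'d::finite" where
  "cell_point k m = (SOME y. y \<in> unit_cube \<and> dyadic_cell k y = m)"

lemma cell_point:
  assumes "m \<in> dyadic_cell k ` (unit_cube :: (real^'d::finite) set)"
  shows "(cell_point k m :: real^'d) \<in> unit_cube" "dyadic_cell k (cell_point k m :: real^'d) = m"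
proof -
  have "\<exists>y::real^'d. y \<in> unit_cube \<and> dyadic_cell k y = m" using assms by blast
  then have "(cell_point k m :: real^'d) \<in> unit_cube \<and> dyadic_cell k (cell_point k m :: real^'d) = m"
    unfolding cell_point_def by (rule someI_ex)
  then show "(cell_point k m :: real^'d) \<in> unit_cube" "dyadic_cell k (cell_point k m :: real^'d) = m"
    by auto
qed

lemma cell_point_close:
  fixes y :: "real^'d::finite"
  assumes "y \<in> unit_cube"
  shows "\<bar>y$i - cell_point k (dyadic_cell k y) $ i\<bar> < 1 / 2^k"
proof -
  have "dyadic_cell k y \<in> dyadic_cell k ` (unit_cube :: (real^'d) set)" using assms by blast
  note cp = cell_point[OF this]
  show ?thesis
    by (rule dyadic_cell_eq_imp_close) (use cp assms in \<open>auto simp: unit_cube_half_open\<close>)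
qed

lemma near_cell_point_in_inner_cube:
  fixes y w :: "real^'d::finite"
  assumes \<delta>: "0 < \<delta>" "4 / 2^k \<le> \<delta>" and y: "y \<in> inner_cube \<delta>"
    and w: "\<And>i. \<bar>w$i - cell_point k (dyadic_cell k y) $ i\<bar> \<le> 1 / 2^k"
  shows "w \<in> inner_cube (\<delta>/2)"
proof -
  have "\<delta>/2 \<le> w$i \<and> w$i \<le> 1 - \<delta>/2" for i
  proof -
    have "4 * (1 / 2^k) \<le> \<delta>" using \<delta>(2) by simp
    moreover have "\<bar>y$i - cell_point k (dyadic_cell k y) $ i\<bar> < 1/2^k"
      using inner_cube_subset_unit_cube[OF \<delta>(1)] y by (intro cell_point_close) auto
    moreover have "\<delta> \<le> y$i \<and> y$i \<le> 1 - \<delta>" using y unfolding inner_cube_def by auto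
    ultimately show ?thesis using w[of i] unfolding abs_le_iff abs_less_iff by linarith
  qed
  then show ?thesis unfolding inner_cube_def by auto
qed

definition cell_step :: "(real^'d::finite \<Rightarrow> real) \<Rightarrow> real \<Rightarrow> nat \<Rightarrow> nat \<Rightarrow> real" where
  "cell_step g \<delta> k c =
     (if c \<in> dyadic_cell k ` (inner_cube \<delta> :: (real^'d) set) then g (cell_point k c) else 0)"

lemma abs_cell_step_le: "(\<And>y. \<bar>g y\<bar> \<le> B) \<Longrightarrow> \<bar>cell_step g \<delta> k c\<bar> \<le> B"
  unfolding cell_step_def by (auto intro: order_trans[OF abs_ge_zero])

lemma cell_step_close:
  fixes g :: "real^'d::finite \<Rightarrow> real"
  assumes \<delta>: "0 < \<delta>" "4 / 2^k \<le> \<delta>" and c: "c \<in> dyadic_cell k ` (inner_cube \<delta> :: (real^'d) set)"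
    and w: "\<And>i. \<bar>w$i - cell_point k c $ i\<bar> \<le> 1/2^k"
    and modulus: "\<And>y z. y \<in> inner_cube (\<delta>/2) \<Longrightarrow> z \<in> inner_cube (\<delta>/2) \<Longrightarrow>
      dist y z \<le> CARD('d) * (1/2^k) \<Longrightarrow> \<bar>g y - g z\<bar> \<le> \<epsilon>"
  shows "\<bar>g w - cell_step g \<delta> k c\<bar> \<le> \<epsilon>"
proof -
  obtain y :: "real^'d" where y: "y \<in> inner_cube \<delta>" "c = dyadic_cell k y" using c by blast
  have "w \<in> inner_cube (\<delta>/2)"
    using near_cell_point_in_inner_cube[OF \<delta> y(1)] w y(2) by simp
  moreover have "(cell_point k c :: real^'d) \<in> inner_cube (\<delta>/2)"
    using near_cell_point_in_inner_cube[OF \<delta> y(1), of "cell_point k c"] y(2) by simp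
  ultimately show ?thesis
    using modulus dist_le_CARD_mult[OF w] c by (simp add: cell_step_def)
qed

section \<open>Quantiles of an atomless measure on the line\<close>

lemma open_downset_eq_lessThan_Sup:
  fixes S :: "real set"
  assumes "open S" "S \<noteq> {}" "bdd_above S" and down: "\<And>x y. x \<le> y \<Longrightarrow> y \<in> S \<Longrightarrow> x \<in> S"
  shows "S = {..<Sup S}"
proof safe
  fix x assume "x \<in> S"
  then obtain e where e: "e > 0" "ball x e \<subseteq> S" using assms(1) open_contains_ball by blast
  then have "x + e/2 \<in> S" by (auto simp: dist_real_def)
  then have "x + e/2 \<le> Sup S" using assms(3) by (rule cSup_upper)
  then show "x < Sup S" using e by simp
next
  fix x assume "x < Sup S"
  then obtain y where "y \<in> S" "x < y" using less_cSup_iff[OF assms(2,3)] by auto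
  then show "x \<in> S" using down[of x y] by simp
qed

lemma (in finite_borel_measure) measure_cdf_less:
  assumes atomless: "\<And>x. measure M {x} = 0" and t: "0 \<le> t" "t \<le> measure M (space M)"
  shows "measure M {x. cdf M x < t} = t"
proof (cases "t = 0")
  case True
  then have "{x. cdf M x < t} = {}" using cdf_nonneg by (auto simp: not_less)
  then show ?thesis using True by simp
next
  case False
  then have tpos: "t > 0" using t by simp
  define S where "S = {x. cdf M x < t}"
  have cont: "continuous_on UNIV (cdf M)"
    using isCont_cdf atomless by (simp add: continuous_on_eq_continuous_at)
  show ?thesis
  proof (cases "S = UNIV")
    case True
    have "measure M (space M) \<le> t"
    proof (rule tendsto_le[OF _ tendsto_const cdf_lim_at_top])
      show "\<forall>\<^sub>F x in at_top. cdf M x \<le> t" using True unfolding S_def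
        by (auto intro!: always_eventually less_imp_le)
    qed simp
    then show ?thesis using True t borel_UNIV unfolding S_def by simp
  next
    case False
    then obtain b where "b \<notin> S" by auto
    then have b: "t \<le> cdf M b" unfolding S_def by simp
    have "\<forall>\<^sub>F x in at_bot. cdf M x < t"
      using order_tendstoD(2)[OF cdf_lim_at_bot tpos] .
    then obtain a where "a \<in> S" unfolding S_def eventually_at_bot_linorder by auto
    then have ne: "S \<noteq> {}" by auto
    have bdd: "bdd_above S"
    proof (rule bdd_aboveI[of _ b])
      fix x assume "x \<in> S"
      then show "x \<le> b" using b cdf_nondecreasing[of b x] unfolding S_def by force
    qed
    define s where "s = Sup S"
    have "open S" unfolding S_def by (rule open_Collect_less[OF cont continuous_on_const])
    then have Seq: "S = {..<s}"
      unfolding s_def using ne bdd cdf_nondecreasing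
      by (intro open_downset_eq_lessThan_Sup) (auto simp: S_def intro: le_less_trans)
    have "s \<in> closure S" unfolding s_def using closure_contains_Sup[OF ne bdd] .
    moreover have "closure S \<subseteq> {x. cdf M x \<le> t}"
      by (rule closure_minimal) (auto simp: S_def intro: closed_Collect_le[OF cont continuous_on_const])
    moreover have "s \<notin> S" using Seq by simp
    ultimately have "cdf M s = t" unfolding S_def by auto
    moreover have "measure M {..<s} = measure M ({..s} - {s})"
      by (intro arg_cong[where f="measure M"]) auto
    moreover have "\<dots> = measure M {..s} - measure M {s}"
      by (rule finite_measure_Diff) auto
    ultimately show ?thesis using Seq atomless unfolding S_def by (simp add: cdf_def)
  qed
qed

lemma (in finite_borel_measure) measurable_cdf[measurable]: "cdf M \<in> borel_measurable borel"
  by (rule borel_measurable_mono) (auto simp: mono_def cdf_nondecreasing)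

lemma (in finite_borel_measure) measure_cdf_ge_total:
  assumes "\<And>x. measure M {x} = 0"
  shows "measure M {x. measure M (space M) \<le> cdf M x} = 0"
proof -
  have "{x. measure M (space M) \<le> cdf M x} = space M - {x. cdf M x < measure M (space M)}"
    by (auto simp: borel_UNIV)
  moreover have "{x. cdf M x < measure M (space M)} \<in> sets M"
    unfolding M_is_borel by measurable
  ultimately show ?thesis
    using finite_measure_compl[of "{x. cdf M x < measure M (space M)}"]
      measure_cdf_less[OF assms, of "measure M (space M)"] by (simp add: borel_UNIV)
qed

section \<open>Sequences in the unit cube driven by an atomless measure\<close>

locale atomless_cube_seq =
  fixes M :: "real measure" and Y :: "nat \<Rightarrow> real \<Rightarrow> real^'d::finite"
  assumes finite_borel: "finite_borel_measure M"
    and atomless: "\<And>x. measure M {x} = 0"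
    and measurable_Y[measurable]: "\<And>n. Y n \<in> borel_measurable borel"
    and Y_in_unit_cube: "\<And>n x. Y n x \<in> unit_cube"
    and tight: "\<And>\<epsilon>. \<epsilon> > 0 \<Longrightarrow> \<exists>\<delta>>0. \<forall>n. measure M {x. Y n x \<notin> inner_cube \<delta>} < \<epsilon>"
begin

sublocale finite_borel_measure M by (rule finite_borel)

lemma space_M[simp]: "space M = UNIV" by (rule borel_UNIV)

lemma sets_M[measurable_cong]: "sets M = sets borel" by (rule M_is_borel)

abbreviation total_mass :: real where "total_mass \<equiv> measure M UNIV"

definition cell_mass :: "nat \<Rightarrow> nat \<Rightarrow> nat \<Rightarrow> real" where
  "cell_mass n k m = measure M {x. dyadic_cell k (Y n x) = m}"

lemma measure_dyadic_cell_in: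
  "finite S \<Longrightarrow> measure M {x. dyadic_cell k (Y n x) \<in> S} = (\<Sum>m\<in>S. cell_mass n k m)"
  using measure_vimage_eq_sum[of "\<lambda>x. dyadic_cell k (Y n x)" S] by (simp add: cell_mass_def)

lemma cell_mass_split:
  assumes "k \<le> j"
  shows "cell_mass n k m = (\<Sum>i<2^(CARD('d)*(j-k)). cell_mass n j (2^(CARD('d)*(j-k)) * m + i))"
proof -
  let ?Q = "2^(CARD('d)*(j-k)) :: nat"
  have children: "a div ?Q = m \<longleftrightarrow> a \<in> (\<lambda>i. ?Q*m+i) ` {..<?Q}" for a
    by (auto intro!: image_eqI[of _ _ "a mod ?Q"] simp: mult.commute)
  have "cell_mass n k m = measure M {x. dyadic_cell j (Y n x) \<in> (\<lambda>i. ?Q*m+i) ` {..<?Q}}"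
    unfolding cell_mass_def by (simp only: children[symmetric] dyadic_cell_div[OF assms])
  also have "\<dots> = (\<Sum>i<?Q. cell_mass n j (?Q * m + i))"
    by (subst measure_dyadic_cell_in) (auto simp: sum.reindex inj_on_def)
  finally show ?thesis .
qed

end

lemma sum_lessThan_add: "sum f {..<a + b} = sum f {..<a} + (\<Sum>i<b. f (a + i))" for a b :: nat
  by (induction b) (auto simp: add.assoc[symmetric])

text \<open>Along a subsequence on which all cell masses converge, the limit masses are consistent
  across levels; ordering the cells of each level by index and laying their limit masses out
  consecutively on \<open>[0, total_mass)\<close> therefore gives nested partitions, and the uniform law
  of \<open>cdf M\<close> under \<open>M\<close> transports them back to \<open>M\<close>.\<close>

locale cell_convergent_subseq = atomless_cube_seq M Y
  for M :: "real measure" and Y :: "nat \<Rightarrow> real \<Rightarrow> real^'d::finite" +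
  fixes r :: "nat \<Rightarrow> nat"
  assumes strict_mono_r: "strict_mono r"
    and convergent_cell_mass: "\<And>k m. convergent (\<lambda>n. cell_mass (r n) k m)"
begin

definition limit_mass :: "nat \<Rightarrow> nat \<Rightarrow> real" where
  "limit_mass k m = lim (\<lambda>n. cell_mass (r n) k m)"

lemma cell_mass_tendsto: "(\<lambda>n. cell_mass (r n) k m) \<longlonglongrightarrow> limit_mass k m"
  unfolding limit_mass_def using convergent_cell_mass convergent_LIMSEQ_iff by blast

lemma limit_mass_nonneg: "0 \<le> limit_mass k m"
  by (rule LIMSEQ_le_const[OF cell_mass_tendsto]) (auto simp: cell_mass_def)

lemma limit_mass_split:
  assumes "k \<le> j"
  shows "limit_mass k m = (\<Sum>i<2^(CARD('d)*(j-k)). limit_mass j (2^(CARD('d)*(j-k)) * m + i))"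
proof -
  have "(\<lambda>n. cell_mass (r n) k m) \<longlonglongrightarrow>
      (\<Sum>i<2^(CARD('d)*(j-k)). limit_mass j (2^(CARD('d)*(j-k)) * m + i))"
    unfolding cell_mass_split[OF assms] by (intro tendsto_sum cell_mass_tendsto)
  then show ?thesis using cell_mass_tendsto LIMSEQ_unique by blast
qed

lemma limit_mass_0_0: "limit_mass 0 0 = total_mass"
  using cell_mass_tendsto[of 0 0] by (simp add: cell_mass_def LIMSEQ_const_iff)

definition cum_mass :: "nat \<Rightarrow> nat \<Rightarrow> real" where
  "cum_mass k m = (\<Sum>i<m. limit_mass k i)"

lemma cum_mass_Suc: "cum_mass k (Suc m) = cum_mass k m + limit_mass k m"
  unfolding cum_mass_def by simp

lemma cum_mass_0[simp]: "cum_mass k 0 = 0"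
  unfolding cum_mass_def by simp

lemma cum_mass_mono: "m \<le> m' \<Longrightarrow> cum_mass k m \<le> cum_mass k m'"
  unfolding cum_mass_def by (rule sum_mono2) (auto intro: limit_mass_nonneg)

lemma cum_mass_nonneg: "0 \<le> cum_mass k m"
  using cum_mass_mono[of 0 m k] by simp

lemma cum_mass_refine:
  assumes "k \<le> j"
  shows "cum_mass j (2^(CARD('d)*(j-k)) * m) = cum_mass k m"
proof (induction m)
  case (Suc m)
  let ?Q = "2^(CARD('d)*(j-k)) :: nat"
  have "cum_mass j (?Q * Suc m) = cum_mass j (?Q * m) + (\<Sum>i<?Q. limit_mass j (?Q * m + i))"
    unfolding cum_mass_def by (simp add: sum_lessThan_add add.commute[of "?Q"])
  then show ?case using Suc limit_mass_split[OF assms, of m] by (simp add: cum_mass_Suc)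
qed simp

lemma cum_mass_last: "cum_mass k (2^(CARD('d)*k)) = total_mass"
  using cum_mass_refine[of 0 k 1] by (simp add: cum_mass_def limit_mass_0_0)

definition quantile_cell :: "nat \<Rightarrow> real \<Rightarrow> nat" where
  "quantile_cell k u = (LEAST m. u < cum_mass k (Suc m))"

lemma quantile_cell_eqI:
  assumes "cum_mass k m \<le> u" "u < cum_mass k (Suc m)"
  shows "quantile_cell k u = m"
  unfolding quantile_cell_def
proof (rule Least_equality)
  fix m' assume "u < cum_mass k (Suc m')"
  then show "m \<le> m'"
    using assms cum_mass_mono[of "Suc m'" m k] by (cases "m \<le> m'") auto
qed fact

lemma quantile_cell:
  assumes "0 \<le> u" "u < total_mass"
  shows "quantile_cell k u < 2^(CARD('d)*k)" "cum_mass k (quantile_cell k u) \<le> u"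
    "u < cum_mass k (Suc (quantile_cell k u))"
proof -
  have ex: "u < cum_mass k (Suc (2^(CARD('d)*k) - 1))" using assms cum_mass_last[of k] by simp
  show "u < cum_mass k (Suc (quantile_cell k u))"
    unfolding quantile_cell_def by (rule LeastI[of "\<lambda>m. u < cum_mass k (Suc m)", OF ex])
  have "quantile_cell k u \<le> 2^(CARD('d)*k) - 1"
    unfolding quantile_cell_def by (rule Least_le[of "\<lambda>m. u < cum_mass k (Suc m)", OF ex])
  then show "quantile_cell k u < 2^(CARD('d)*k)" by (simp add: le_diff_conv2)
  show "cum_mass k (quantile_cell k u) \<le> u"
  proof (cases "quantile_cell k u")
    case (Suc m)
    then show ?thesis unfolding quantile_cell_def
      using not_less_Least[of m "\<lambda>m. u < cum_mass k (Suc m)"] by simp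
  qed (use assms in simp)
qed

lemma quantile_cell_div:
  assumes "k \<le> j" "0 \<le> u" "u < total_mass"
  shows "quantile_cell j u div 2^(CARD('d)*(j-k)) = quantile_cell k u"
proof (rule div_nat_eqI)
  let ?Q = "2^(CARD('d)*(j-k)) :: nat"
  note qk = quantile_cell[OF assms(2,3), of k] and qj = quantile_cell[OF assms(2,3), of j]
  show "?Q * quantile_cell k u \<le> quantile_cell j u"
  proof (rule ccontr)
    assume "\<not> ?Q * quantile_cell k u \<le> quantile_cell j u"
    then have "cum_mass j (Suc (quantile_cell j u)) \<le> cum_mass j (?Q * quantile_cell k u)"
      by (intro cum_mass_mono) simp
    then show False using cum_mass_refine[OF assms(1)] qk qj by simp
  qed
  show "quantile_cell j u < ?Q * Suc (quantile_cell k u)"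
  proof (rule ccontr)
    assume "\<not> quantile_cell j u < ?Q * Suc (quantile_cell k u)"
    then have "cum_mass j (?Q * Suc (quantile_cell k u)) \<le> cum_mass j (quantile_cell j u)"
      by (intro cum_mass_mono) simp
    then show False using cum_mass_refine[OF assms(1), of "Suc (quantile_cell k u)"] qk qj by simp
  qed
qed

lemma quantile_cell_nonempty:
  assumes "0 \<le> u" "u < total_mass"
  shows "quantile_cell k u \<in> dyadic_cell k ` (unit_cube :: (real^'d) set)"
proof (rule ccontr)
  assume empty: "quantile_cell k u \<notin> dyadic_cell k ` (unit_cube :: (real^'d) set)"
  have "dyadic_cell k (Y n x) \<noteq> quantile_cell k u" for n x
    using empty Y_in_unit_cube[of n x] by (metis imageI)
  then have "cell_mass n k (quantile_cell k u) = 0" for n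
    unfolding cell_mass_def by simp
  then have "limit_mass k (quantile_cell k u) = 0" unfolding limit_mass_def by simp
  then show False using quantile_cell[OF assms, of k] by (simp add: cum_mass_Suc)
qed

definition cell_approx :: "nat \<Rightarrow> real \<Rightarrow> real^'d" where
  "cell_approx k u = cell_point k (quantile_cell k u)"

lemma cell_approx:
  assumes "0 \<le> u" "u < total_mass"
  shows "cell_approx k u \<in> unit_cube" "dyadic_cell k (cell_approx k u) = quantile_cell k u"
  unfolding cell_approx_def using cell_point[OF quantile_cell_nonempty[OF assms]] by auto

lemma cell_approx_close:
  assumes "0 \<le> u" "u < total_mass" "k \<le> j"
  shows "\<bar>cell_approx j u $ i - cell_approx k u $ i\<bar> < 1/2^k"
proof (rule dyadic_cell_eq_imp_close)
  have "dyadic_cell k (cell_approx j u) = dyadic_cell j (cell_approx j u) div 2^(CARD('d)*(j-k))"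
    by (rule dyadic_cell_div[OF assms(3), symmetric])
  also have "\<dots> = dyadic_cell k (cell_approx k u)"
    using cell_approx[OF assms(1,2)] quantile_cell_div[OF assms(3,1,2)] by simp
  finally show "dyadic_cell k (cell_approx j u) = dyadic_cell k (cell_approx k u)" .
qed (use cell_approx(1)[OF assms(1,2)] unit_cube_half_open in auto)

definition quantile_point :: "real \<Rightarrow> real^'d" where
  "quantile_point u = lim (\<lambda>k. cell_approx k u)"

lemma cell_approx_tendsto:
  assumes "0 \<le> u" "u < total_mass"
  shows "(\<lambda>k. cell_approx k u) \<longlonglongrightarrow> quantile_point u"
proof -
  have "Cauchy (\<lambda>k. cell_approx k u)"
    using cell_approx_close[OF assms] by (rule Cauchy_if_dyadic_close)
  then show ?thesis
    unfolding quantile_point_def using Cauchy_convergent convergent_LIMSEQ_iff by blast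
qed

lemma quantile_point_close:
  assumes "0 \<le> u" "u < total_mass"
  shows "\<bar>quantile_point u $ i - cell_approx k u $ i\<bar> \<le> 1/2^k"
proof (rule tendsto_upperbound)
  show "(\<lambda>j. \<bar>cell_approx j u $ i - cell_approx k u $ i\<bar>) \<longlonglongrightarrow> \<bar>quantile_point u $ i - cell_approx k u $ i\<bar>"
    by (intro tendsto_intros tendsto_vec_nth cell_approx_tendsto[OF assms])
  show "\<forall>\<^sub>F j in sequentially. \<bar>cell_approx j u $ i - cell_approx k u $ i\<bar> \<le> 1/2^k"
    using cell_approx_close[OF assms] less_imp_le unfolding eventually_sequentially by blast
qed simp

definition limit_map :: "real \<Rightarrow> real^'d" where
  "limit_map x = quantile_point (cdf M x)"

lemma measurable_limit_map[measurable]: "limit_map \<in> borel_measurable borel"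
proof -
  have "(\<lambda>x. cell_approx k (cdf M x)) \<in> borel_measurable borel" for k
    unfolding cell_approx_def quantile_cell_def by measurable
  then have "(\<lambda>x. lim (\<lambda>k. cell_approx k (cdf M x))) \<in> borel_measurable borel"
    by (rule borel_measurable_lim_metric)
  then show ?thesis unfolding limit_map_def quantile_point_def .
qed

text \<open>The junk value \<open>2^(CARD('d)*k)\<close> is taken on the \<open>M\<close>-null set where \<open>cdf M\<close> attains the
  total mass.\<close>

definition limit_cell :: "nat \<Rightarrow> real \<Rightarrow> nat" where
  "limit_cell k x = (if cdf M x < total_mass then quantile_cell k (cdf M x) else 2^(CARD('d)*k))"

lemma measurable_limit_cell[measurable]: "limit_cell k \<in> measurable borel (count_space UNIV)"
  unfolding limit_cell_def quantile_cell_def by measurable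

lemma measure_limit_cell:
  assumes m: "m < 2^(CARD('d)*k)"
  shows "measure M {x. limit_cell k x = m} = limit_mass k m"
proof -
  have "cum_mass k (Suc m) \<le> cum_mass k (2^(CARD('d)*k))"
    using m by (intro cum_mass_mono) simp
  then have le: "cum_mass k (Suc m) \<le> total_mass" by (simp only: cum_mass_last)
  have iff: "limit_cell k x = m \<longleftrightarrow> cdf M x < cum_mass k (Suc m) \<and> cum_mass k m \<le> cdf M x" for x
  proof
    assume x: "limit_cell k x = m"
    then have total: "cdf M x < total_mass" using m by (auto simp: limit_cell_def split: if_splits)
    then have "quantile_cell k (cdf M x) = m" using x by (simp add: limit_cell_def)
    then show "cdf M x < cum_mass k (Suc m) \<and> cum_mass k m \<le> cdf M x"
      using quantile_cell(2,3)[OF cdf_nonneg total, of k] by simp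
  next
    assume "cdf M x < cum_mass k (Suc m) \<and> cum_mass k m \<le> cdf M x"
    then show "limit_cell k x = m"
      using le by (simp add: limit_cell_def quantile_cell_eqI)
  qed
  then have "{x. limit_cell k x = m} = {x. cdf M x < cum_mass k (Suc m)} - {x. cdf M x < cum_mass k m}"
    by (simp add: set_eq_iff not_less)
  then have "measure M {x. limit_cell k x = m} =
      measure M {x. cdf M x < cum_mass k (Suc m)} - measure M {x. cdf M x < cum_mass k m}"
    using cum_mass_mono[of m "Suc m" k] by (simp add: finite_measure_Diff subset_eq)
  also have "\<dots> = cum_mass k (Suc m) - cum_mass k m"
    using measure_cdf_less[OF atomless] cum_mass_nonneg le cum_mass_mono[of m "Suc m" k] by simp
  finally show ?thesis by (simp add: cum_mass_Suc)
qed

lemma integral_cell_step_tendsto: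
  fixes h :: "nat \<Rightarrow> real"
  assumes S: "S \<subseteq> {..<2^(CARD('d)*k)}"
  shows "(\<lambda>n. \<integral>x. (if dyadic_cell k (Y (r n) x) \<in> S then h (dyadic_cell k (Y (r n) x)) else 0) \<partial>M)
    \<longlonglongrightarrow> (\<integral>x. (if limit_cell k x \<in> S then h (limit_cell k x) else 0) \<partial>M)"
proof -
  have "finite S" using S finite_subset by blast
  then have "(\<integral>x. (if dyadic_cell k (Y n x) \<in> S then h (dyadic_cell k (Y n x)) else 0) \<partial>M) =
      (\<Sum>m\<in>S. h m * cell_mass n k m)" for n
    by (subst integral_finite_valued) (auto simp: cell_mass_def)
  moreover have "(\<integral>x. (if limit_cell k x \<in> S then h (limit_cell k x) else 0) \<partial>M) =
      (\<Sum>m\<in>S. h m * limit_mass k m)"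
    using \<open>finite S\<close> S by (subst integral_finite_valued) (auto simp: measure_limit_cell intro!: sum.cong)
  ultimately show ?thesis by (simp add: tendsto_sum tendsto_mult_left cell_mass_tendsto)
qed

lemma measure_limit_cell_notin_le:
  assumes S: "S \<subseteq> {..<2^(CARD('d)*k)}"
    and bound: "\<And>n. measure M {x. dyadic_cell k (Y n x) \<notin> S} \<le> \<epsilon>"
  shows "measure M {x. limit_cell k x \<notin> S} \<le> \<epsilon>"
proof -
  define T where "T = {..<2^(CARD('d)*k)} - S"
  have "(\<Sum>m\<in>T. cell_mass n k m) \<le> \<epsilon>" for n
  proof -
    have "(\<Sum>m\<in>T. cell_mass n k m) = measure M {x. dyadic_cell k (Y n x) \<in> T}"
      by (subst measure_dyadic_cell_in) (auto simp: T_def)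
    also have "\<dots> \<le> measure M {x. dyadic_cell k (Y n x) \<notin> S}"
      by (rule finite_measure_mono) (auto simp: T_def)
    finally show ?thesis using bound[of n] by simp
  qed
  then have "(\<Sum>m\<in>T. limit_mass k m) \<le> \<epsilon>"
    by (intro LIMSEQ_le_const2[OF tendsto_sum[OF cell_mass_tendsto]]) auto
  have "{x. limit_cell k x \<notin> S} \<subseteq> {x. limit_cell k x \<in> T} \<union> {x. total_mass \<le> cdf M x}"
    using quantile_cell(1)[OF cdf_nonneg] by (auto simp: T_def limit_cell_def)
  then have "measure M {x. limit_cell k x \<notin> S} \<le>
      measure M {x. limit_cell k x \<in> T} + measure M {x. total_mass \<le> cdf M x}"
    by (intro order.trans[OF finite_measure_mono measure_Un_le]) auto
  moreover have "measure M {x. total_mass \<le> cdf M x} = 0"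
    using measure_cdf_ge_total[OF atomless] by simp
  moreover have "measure M {x. limit_cell k x \<in> T} = (\<Sum>m\<in>T. limit_mass k m)"
    using measure_vimage_eq_sum[of "limit_cell k" T]
    by (auto simp: T_def measure_limit_cell intro!: sum.cong)
  ultimately show ?thesis using \<open>(\<Sum>m\<in>T. limit_mass k m) \<le> \<epsilon>\<close> by simp
qed

context
  fixes g :: "real^'d \<Rightarrow> real" and B \<epsilon> \<delta> :: real and k :: nat
  assumes bound: "\<And>y. \<bar>g y\<bar> \<le> B" and g_measurable[measurable]: "g \<in> borel_measurable borel"
    and \<delta>: "0 < \<delta>" "4 / 2^k \<le> \<delta>" and "0 \<le> \<epsilon>"
    and modulus: "\<And>y z. y \<in> inner_cube (\<delta>/2) \<Longrightarrow> z \<in> inner_cube (\<delta>/2) \<Longrightarrow>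
      dist y z \<le> CARD('d) * (1/2^k) \<Longrightarrow> \<bar>g y - g z\<bar> \<le> \<epsilon>"
begin

lemma abs_integral_minus_cell_step:
  "\<bar>(\<integral>x. g (Y n x) \<partial>M) - (\<integral>x. cell_step g \<delta> k (dyadic_cell k (Y n x)) \<partial>M)\<bar>
    \<le> \<epsilon> * total_mass + 2*B * measure M {x. Y n x \<notin> inner_cube \<delta>}"
proof -
  have "\<bar>g (Y n x) - cell_step g \<delta> k (dyadic_cell k (Y n x))\<bar>
      \<le> \<epsilon> + 2*B * indicator {x. Y n x \<notin> inner_cube \<delta>} x"
    for x
  proof (cases "Y n x \<in> inner_cube \<delta>")
    case True
    then show ?thesis
      using cell_step_close[where g=g, OF \<delta> _ _ modulus] cell_point_close[OF Y_in_unit_cube]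
      by (force intro: less_imp_le)
  next
    case False
    have "\<bar>g (Y n x) - cell_step g \<delta> k (dyadic_cell k (Y n x))\<bar> \<le> 2*B"
      using bound[of "Y n x"] abs_cell_step_le[where g=g, OF bound, of \<delta> k "dyadic_cell k (Y n x)"]
      by linarith
    then show ?thesis using False \<open>0 \<le> \<epsilon>\<close> by (simp add: indicator_def)
  qed
  then show ?thesis
    using bound abs_cell_step_le[where g=g, OF bound]
    by (intro abs_integral_diff_le[of _ _ B, simplified]) (auto simp: inner_cube_eq_cbox)
qed

lemma abs_integral_limit_map_minus_cell_step:
  "\<bar>(\<integral>x. g (limit_map x) \<partial>M) - (\<integral>x. cell_step g \<delta> k (limit_cell k x) \<partial>M)\<bar>
    \<le> \<epsilon> * total_mass +
      2*B * measure M {x. limit_cell k x \<notin> dyadic_cell k ` (inner_cube \<delta> :: (real^'d) set)}"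
proof -
  have "\<bar>g (limit_map x) - cell_step g \<delta> k (limit_cell k x)\<bar>
      \<le> \<epsilon> + 2*B * indicator {x. limit_cell k x \<notin> dyadic_cell k ` (inner_cube \<delta> :: (real^'d) set)} x"
    for x
  proof (cases "limit_cell k x \<in> dyadic_cell k ` (inner_cube \<delta> :: (real^'d) set)")
    case True
    then have "limit_cell k x < 2^(CARD('d)*k)" using dyadic_cell_less[where 'd='d] by auto
    then have total: "cdf M x < total_mass" by (auto simp: limit_cell_def split: if_splits)
    then have "limit_cell k x = quantile_cell k (cdf M x)" by (simp add: limit_cell_def)
    then show ?thesis
      using cell_step_close[where g=g and w="limit_map x", OF \<delta> True _ modulus]
        quantile_point_close[OF cdf_nonneg total] True
      by (simp add: limit_map_def cell_approx_def indicator_def)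
  next
    case False
    have "\<bar>g (limit_map x) - cell_step g \<delta> k (limit_cell k x)\<bar> \<le> 2*B"
      using bound[of "limit_map x"] abs_cell_step_le[where g=g, OF bound, of \<delta> k "limit_cell k x"]
      by linarith
    then show ?thesis using False \<open>0 \<le> \<epsilon>\<close> by (simp add: indicator_def)
  qed
  then show ?thesis
    using bound abs_cell_step_le[where g=g, OF bound]
    by (intro abs_integral_diff_le[of _ _ B, simplified]) auto
qed

end

text \<open>Uniformly in \<open>n\<close>, tightness and uniform continuity on \<open>inner_cube (\<delta>/2)\<close> reduce both
  integrals to integrals of a step function over the level-\<open>k\<close> cells, whose convergence is
  the convergence of finitely many cell masses.\<close>

lemma integral_limit_map_tendsto:
  fixes g :: "real^'d \<Rightarrow> real"
  assumes cont: "continuous_on unit_cube g" and bound: "\<And>y. \<bar>g y\<bar> \<le> B"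
    and g_measurable[measurable]: "g \<in> borel_measurable borel"
  shows "(\<lambda>n. \<integral>x. g (Y (r n) x) \<partial>M) \<longlonglongrightarrow> (\<integral>x. g (limit_map x) \<partial>M)"
proof (rule LIMSEQ_by_approximation)
  fix \<epsilon> :: real assume "\<epsilon> > 0"
  have "0 \<le> B" using bound[of 0] by linarith
  define \<epsilon>' where "\<epsilon>' = \<epsilon> / (total_mass + 2 * B + 1)"
  have "0 < total_mass + 2 * B + 1" using \<open>0 \<le> B\<close> measure_nonneg[of M UNIV] by linarith
  then have "\<epsilon>' > 0" and "\<epsilon>' * (total_mass + 2 * B + 1) = \<epsilon>"
    using \<open>\<epsilon> > 0\<close> unfolding \<epsilon>'_def by simp_all
  then have \<epsilon>'_small: "\<epsilon>' * total_mass + 2 * B * \<epsilon>' \<le> \<epsilon>" by (simp add: algebra_simps)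
  obtain \<delta> where \<delta>: "\<delta> > 0" "\<And>n. measure M {x. Y n x \<notin> inner_cube \<delta>} < \<epsilon>'"
    using tight[OF \<open>\<epsilon>' > 0\<close>] by blast
  have "uniformly_continuous_on (inner_cube (\<delta>/2)) g"
    using inner_cube_subset_unit_cube[of "\<delta>/2"] \<delta>(1) unfolding inner_cube_eq_cbox
    by (intro compact_uniformly_continuous continuous_on_subset[OF cont] compact_cbox) auto
  then obtain \<eta> where \<eta>: "\<eta> > 0"
    "\<And>y z. y \<in> inner_cube (\<delta>/2) \<Longrightarrow> z \<in> inner_cube (\<delta>/2) \<Longrightarrow> dist z y < \<eta> \<Longrightarrow> dist (g z) (g y) < \<epsilon>'"
    using uniformly_continuous_onE[OF _ \<open>\<epsilon>' > 0\<close>] by metis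
  have "0 < min (\<eta> / CARD('d)) (\<delta>/4)" using \<eta>(1) \<delta>(1) by simp
  then obtain k where "1/2^k < min (\<eta> / CARD('d)) (\<delta>/4)"
    using inverse_pow2_less_ex by blast
  then have k_fine: "CARD('d) * (1/2^k) < \<eta>" and k_inner: "4 / 2^k \<le> \<delta>"
    by (simp_all add: field_simps)
  have modulus: "\<bar>g y - g z\<bar> \<le> \<epsilon>'"
    if "y \<in> inner_cube (\<delta>/2)" "z \<in> inner_cube (\<delta>/2)" "dist y z \<le> CARD('d) * (1/2^k)" for y z
    using \<eta>(2)[OF that(2,1)] that(3) k_fine by (simp add: dist_real_def dist_commute)
  let ?S = "dyadic_cell k ` (inner_cube \<delta> :: (real^'d) set)"
  have S: "?S \<subseteq> {..<2^(CARD('d)*k)}" using dyadic_cell_less by blast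
  have "measure M {x. limit_cell k x \<notin> ?S} \<le> \<epsilon>'"
  proof (rule measure_limit_cell_notin_le[OF S])
    show "measure M {x. dyadic_cell k (Y n x) \<notin> ?S} \<le> \<epsilon>'" for n
      using finite_measure_mono[of "{x. dyadic_cell k (Y n x) \<notin> ?S}" "{x. Y n x \<notin> inner_cube \<delta>}"]
        \<delta>(2)[of n]
      unfolding inner_cube_eq_cbox by fastforce
  qed
  have "0 \<le> \<epsilon>'" using \<open>\<epsilon>' > 0\<close> by simp
  note step_approx = abs_integral_minus_cell_step[OF bound g_measurable \<delta>(1) k_inner \<open>0 \<le> \<epsilon>'\<close> modulus]
    abs_integral_limit_map_minus_cell_step[OF bound g_measurable \<delta>(1) k_inner \<open>0 \<le> \<epsilon>'\<close> modulus]
  show "\<exists>a' b'. a' \<longlonglongrightarrow> b' \<and> (\<forall>n. \<bar>(\<integral>x. g (Y (r n) x) \<partial>M) - a' n\<bar> \<le> \<epsilon>) \<and>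
    \<bar>(\<integral>x. g (limit_map x) \<partial>M) - b'\<bar> \<le> \<epsilon>"
  proof (intro exI conjI allI)
    show "(\<lambda>n. \<integral>x. cell_step g \<delta> k (dyadic_cell k (Y (r n) x)) \<partial>M) \<longlonglongrightarrow>
        (\<integral>x. cell_step g \<delta> k (limit_cell k x) \<partial>M)"
      using integral_cell_step_tendsto[OF S, of "\<lambda>c. g (cell_point k c)"] by (simp add: cell_step_def)
    show "\<bar>(\<integral>x. g (Y (r n) x) \<partial>M) - (\<integral>x. cell_step g \<delta> k (dyadic_cell k (Y (r n) x)) \<partial>M)\<bar> \<le> \<epsilon>" for n
      using step_approx(1)[of "r n"] \<delta>(2)[of "r n"] \<epsilon>'_small \<open>0 \<le> B\<close> \<open>\<epsilon>' > 0\<close>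
      by (smt (verit) mult_left_mono)
    show "\<bar>(\<integral>x. g (limit_map x) \<partial>M) - (\<integral>x. cell_step g \<delta> k (limit_cell k x) \<partial>M)\<bar> \<le> \<epsilon>"
      using step_approx(2) \<open>measure M {x. limit_cell k x \<notin> ?S} \<le> \<epsilon>'\<close> \<epsilon>'_small \<open>0 \<le> B\<close> \<open>\<epsilon>' > 0\<close>
      by (smt (verit) mult_left_mono)
  qed
qed

end

context atomless_cube_seq
begin

lemma exists_subseq_integral_tendsto:
  "\<exists>r \<Psi>. strict_mono r \<and> \<Psi> \<in> borel_measurable borel \<and>
     (\<forall>(g :: real^'d \<Rightarrow> real) B. continuous_on unit_cube g \<longrightarrow> (\<forall>y. \<bar>g y\<bar> \<le> B) \<longrightarrow>
        g \<in> borel_measurable borel \<longrightarrow>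
        (\<lambda>n. \<integral>x. g (Y (r n) x) \<partial>M) \<longlonglongrightarrow> (\<integral>x. g (\<Psi> x) \<partial>M))"
proof -
  let ?mass = "\<lambda>j n. cell_mass n (fst (prod_decode j)) (snd (prod_decode j))"
  have "bounded (range (?mass j))" for j
    by (intro boundedI[of _ total_mass]) (auto simp: cell_mass_def intro!: finite_measure_mono)
  then obtain r where r: "strict_mono r" "\<And>j. convergent (\<lambda>n. ?mass j (r n))"
    using bounded_seqs_common_convergent_subseq[of ?mass] by blast
  have "convergent (\<lambda>n. cell_mass (r n) k m)" for k m
    using r(2)[of "prod_encode (k, m)"] by simp
  then interpret cell_convergent_subseq M Y r
    by (intro cell_convergent_subseq.intro cell_convergent_subseq_axioms.intro
        atomless_cube_seq_axioms r(1))
  have lim: "(\<lambda>n. \<integral>x. g (Y (r n) x) \<partial>M) \<longlonglongrightarrow> (\<integral>x. g (limit_map x) \<partial>M)"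
    if "continuous_on unit_cube g" "\<forall>y. \<bar>g y\<bar> \<le> B" "g \<in> borel_measurable borel"
    for g :: "real^'d \<Rightarrow> real" and B :: real
    using that by (intro integral_limit_map_tendsto) auto
  show ?thesis
    by (intro exI[of _ r] exI[of _ limit_map] conjI strict_mono_r measurable_limit_map allI impI)
      (simp add: lim)
qed

end

section \<open>Compactifying \<open>\<real>^d\<close> into the open unit cube\<close>

definition squash :: "real \<Rightarrow> real" where
  "squash t = 1/2 + arctan t / pi"

lemma squash_bounds: "0 < squash t" "squash t < 1"
  using arctan_bounded[of t] pi_gt_zero unfolding squash_def by (auto simp: field_simps)

lemma squash_bounds_abs_le:
  assumes "\<bar>t\<bar> \<le> R"
  shows "squash (-R) \<le> squash t" "squash t \<le> 1 - squash (-R)"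
proof -
  have "arctan (-R) \<le> arctan t" "arctan t \<le> arctan R" using assms by (auto simp: arctan_le_iff)
  then have "arctan (-R) / pi \<le> arctan t / pi" "arctan t / pi \<le> arctan R / pi"
    using pi_gt_zero by (auto intro: divide_right_mono)
  then show "squash (-R) \<le> squash t" "squash t \<le> 1 - squash (-R)"
    unfolding squash_def by (auto simp: arctan_minus)
qed

definition squash_vec :: "real^'d::finite \<Rightarrow> real^'d" where
  "squash_vec x = (\<chi> i. squash (x$i))"

definition unsquash_vec :: "real^'d::finite \<Rightarrow> real^'d" where
  "unsquash_vec y = (if y \<in> unit_cube then (\<chi> i. tan (pi * (y$i - 1/2))) else 0)"

lemma squash_vec_in_unit_cube: "squash_vec x \<in> unit_cube"
  unfolding squash_vec_def unit_cube_def using squash_bounds by auto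

lemma tan_squash: "tan (pi * (squash t - 1/2)) = t"
  unfolding squash_def by (simp add: tan_arctan)

lemma unsquash_squash_vec[simp]: "unsquash_vec (squash_vec x) = x"
  using squash_vec_in_unit_cube[of x]
  by (simp add: unsquash_vec_def squash_vec_def tan_squash vec_eq_iff)

lemma squash_vec_in_inner_cube:
  assumes "norm x \<le> R"
  shows "squash_vec (x::real^'d::finite) \<in> inner_cube (squash (-R))"
  unfolding inner_cube_def squash_vec_def
  using squash_bounds_abs_le[OF order_trans[OF component_le_norm_cart assms]] by auto

lemma measurable_squash_vec[measurable]: "squash_vec \<in> borel_measurable borel"
proof -
  have squash: "continuous_on UNIV squash" unfolding squash_def by (intro continuous_intros) auto
  have "continuous_on UNIV (squash_vec :: real^'d \<Rightarrow> real^'d)"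
    unfolding squash_vec_def
    by (intro continuous_on_vec_lambda continuous_on_compose2[OF squash] continuous_intros) auto
  then show ?thesis by (rule borel_measurable_continuous_onI)
qed

lemma continuous_on_unsquash_vec: "continuous_on unit_cube (unsquash_vec :: real^'d::finite \<Rightarrow> real^'d)"
proof -
  have tan: "continuous_on {-(pi/2)<..<pi/2} tan"
    by (rule continuous_at_imp_continuous_on) (auto intro!: isCont_tan dest!: cos_gt_zero_pi)
  have "continuous_on unit_cube (\<lambda>y::real^'d. \<chi> i. tan (pi * (y$i - 1/2)))"
  proof (intro continuous_on_vec_lambda continuous_on_compose2[OF tan] continuous_intros)
    show "(\<lambda>y::real^'d. pi * (y$i - 1/2)) ` unit_cube \<subseteq> {-(pi/2)<..<pi/2}" for i
      unfolding unit_cube_def using pi_gt_zero by (auto simp: field_simps)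
  qed
  then show ?thesis
    by (rule continuous_on_cong[THEN iffD1, rotated 2]) (auto simp: unsquash_vec_def)
qed

lemma measurable_unsquash_vec[measurable]:
  "(unsquash_vec :: real^'d::finite \<Rightarrow> real^'d) \<in> borel_measurable borel"
  unfolding unsquash_vec_def[abs_def]
proof (rule borel_measurable_continuous_on_if)
  show "unit_cube \<in> sets (borel :: (real^'d) measure)"
    unfolding unit_cube_eq_box by (rule borel_open[OF open_box])
  show "continuous_on unit_cube (\<lambda>y::real^'d. \<chi> i. tan (pi * (y$i - 1/2)))"
    using continuous_on_unsquash_vec
    by (rule continuous_on_cong[THEN iffD1, rotated 2]) (auto simp: unsquash_vec_def)
qed (rule continuous_on_const)

section \<open>Splitting a measure on the line into atoms and a diffuse part\<close>

lemma borel_measurable_if_countable: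
  fixes f g :: "'a::t1_space \<Rightarrow> 'b::topological_space"
  assumes "countable A" and "g \<in> borel_measurable borel"
  shows "(\<lambda>x. if x \<in> A then f x else g x) \<in> borel_measurable borel"
proof (rule borel_measurableI)
  fix S :: "'b set" assume "open S"
  have "(\<lambda>x. if x \<in> A then f x else g x) -` S \<inter> space borel = {x\<in>A. f x \<in> S} \<union> (g -` S - A)"
    by (auto split: if_splits)
  moreover have "{x\<in>A. f x \<in> S} \<in> sets borel"
    by (rule sets.countable) (auto intro: countable_subset[OF _ assms(1)] borel_closed)
  moreover have "A \<in> sets borel"
    by (rule sets.countable[OF _ assms(1)]) (auto intro: borel_closed)
  moreover have "g -` S \<in> sets borel" using measurable_sets[OF assms(2)] \<open>open S\<close> by simp
  ultimately show "(\<lambda>x. if x \<in> A then f x else g x) -` S \<inter> space borel \<in> sets borel" by auto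
qed

lemma integral_density_indicator:
  fixes h :: "'a \<Rightarrow> real"
  assumes "S \<in> sets M" "h \<in> borel_measurable M"
  shows "(\<integral>x. h x \<partial>density M (indicator S)) = (\<integral>x. indicator S x * h x \<partial>M)"
proof -
  have "(\<integral>x. h x \<partial>density M (indicator S)) = (\<integral>x. h x \<partial>density M (\<lambda>x. ennreal (indicator S x)))"
    by (simp add: ennreal_indicator)
  also have "\<dots> = (\<integral>x. indicator S x * h x \<partial>M)"
    using assms by (subst integral_density) auto
  finally show ?thesis .
qed

lemma integral_density_indicator_cong:
  fixes h h' :: "'a \<Rightarrow> real"
  assumes "S \<in> sets M" "h \<in> borel_measurable M" "h' \<in> borel_measurable M" "\<And>x. x \<in> S \<Longrightarrow> h x = h' x"
  shows "(\<integral>x. h x \<partial>density M (indicator S)) = (\<integral>x. h' x \<partial>density M (indicator S))"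
proof -
  have "(\<integral>x. indicator S x * h x \<partial>M) = (\<integral>x. indicator S x * h' x \<partial>M)"
    using assms(4) by (intro Bochner_Integration.integral_cong) (auto simp: indicator_def)
  then show ?thesis using assms(1-3) by (simp add: integral_density_indicator)
qed

context finite_measure
begin

lemma integral_split_density:
  fixes h :: "'a \<Rightarrow> real"
  assumes A: "A \<in> sets M" and [measurable]: "h \<in> borel_measurable M" and bound: "\<And>x. \<bar>h x\<bar> \<le> B"
  shows "(\<integral>x. h x \<partial>M) = (\<integral>x. indicator A x * h x \<partial>M) + (\<integral>x. h x \<partial>density M (indicator (space M - A)))"
proof -
  have "0 \<le> B" by (rule order_trans[OF abs_ge_zero bound])
  have int: "integrable M (\<lambda>x. indicator S x * h x)" if "S \<in> sets M" for S
    using that bound \<open>0 \<le> B\<close> by (intro integrable_const_bound[of _ B]) (auto simp: indicator_def)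
  have "(\<integral>x. h x \<partial>M) = (\<integral>x. indicator A x * h x + indicator (space M - A) x * h x \<partial>M)"
    by (intro Bochner_Integration.integral_cong) (auto simp: indicator_def)
  also have "\<dots> = (\<integral>x. indicator A x * h x \<partial>M) + (\<integral>x. indicator (space M - A) x * h x \<partial>M)"
    using A by (intro Bochner_Integration.integral_add int) auto
  finally show ?thesis using A by (simp add: integral_density_indicator)
qed

lemma integral_indicator_tendsto:
  fixes f :: "nat \<Rightarrow> 'a \<Rightarrow> real"
  assumes A: "A \<in> sets M" and [measurable]: "\<And>n. f n \<in> borel_measurable M" "g \<in> borel_measurable M"
    and bound: "\<And>n x. \<bar>f n x\<bar> \<le> B" and lim: "\<And>x. x \<in> A \<Longrightarrow> (\<lambda>n. f n x) \<longlonglongrightarrow> g x"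
  shows "(\<lambda>n. \<integral>x. indicator A x * f n x \<partial>M) \<longlonglongrightarrow> (\<integral>x. indicator A x * g x \<partial>M)"
proof (rule integral_dominated_convergence[where w="\<lambda>x. B"])
  show "AE x in M. (\<lambda>n. indicator A x * f n x) \<longlonglongrightarrow> indicator A x * g x"
    using lim by (intro AE_I2) (auto simp: indicator_def)
  show "AE x in M. norm (indicator A x * f n x) \<le> B" for n
    using bound[of n] order_trans[OF abs_ge_zero bound] by (intro AE_I2) (auto simp: indicator_def)
qed (use A in auto)

lemma integral_tendsto_split_density:
  fixes h :: "nat \<Rightarrow> 'a \<Rightarrow> real"
  assumes A: "A \<in> sets M" and [measurable]: "\<And>n. h n \<in> borel_measurable M" "h' \<in> borel_measurable M"
    and bound: "\<And>n x. \<bar>h n x\<bar> \<le> B" "\<And>x. \<bar>h' x\<bar> \<le> B"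
    and on_A: "\<And>x. x \<in> A \<Longrightarrow> (\<lambda>n. h n x) \<longlonglongrightarrow> h' x"
    and off_A: "(\<lambda>n. \<integral>x. h n x \<partial>density M (indicator (space M - A))) \<longlonglongrightarrow>
      (\<integral>x. h' x \<partial>density M (indicator (space M - A)))"
  shows "(\<lambda>n. \<integral>x. h n x \<partial>M) \<longlonglongrightarrow> (\<integral>x. h' x \<partial>M)"
proof -
  have "(\<lambda>n. (\<integral>x. indicator A x * h n x \<partial>M) + (\<integral>x. h n x \<partial>density M (indicator (space M - A))))
      \<longlonglongrightarrow> (\<integral>x. indicator A x * h' x \<partial>M) + (\<integral>x. h' x \<partial>density M (indicator (space M - A)))"
    by (intro tendsto_add integral_indicator_tendsto[OF A _ _ bound(1) on_A] off_A) auto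
  then show ?thesis
    using integral_split_density[OF A _ bound(1)] integral_split_density[OF A _ bound(2)] by simp
qed

lemma bounded_range_at_atom:
  fixes F :: "nat \<Rightarrow> 'a \<Rightarrow> 'b::metric_space"
  assumes tight: "\<And>\<epsilon>. 0 < \<epsilon> \<Longrightarrow> \<exists>K. compact K \<and> (\<forall>n. measure M {x\<in>space M. F n x \<notin> K} < \<epsilon>)"
    and F: "\<And>n. F n \<in> borel_measurable M" and atom: "{a} \<in> sets M" "0 < measure M {a}"
  shows "bounded (range (\<lambda>n. F n a))"
proof -
  obtain K where K: "compact K" "\<And>n. measure M {x\<in>space M. F n x \<notin> K} < measure M {a}"
    using tight[OF atom(2)] by blast
  have "F n a \<in> K" for n
  proof (rule ccontr)
    assume "F n a \<notin> K"
    then have "{a} \<subseteq> {x\<in>space M. F n x \<notin> K}" using sets.sets_into_space[OF atom(1)] by auto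
    moreover have "{x\<in>space M. F n x \<notin> K} \<in> sets M"
      using measurable_sets[OF F borel_open[OF open_Compl[OF compact_imp_closed[OF K(1)]]]]
      by (simp add: vimage_def Int_def conj_commute)
    ultimately have "measure M {a} \<le> measure M {x\<in>space M. F n x \<notin> K}" by (rule finite_measure_mono)
    then show False using K(2)[of n] by simp
  qed
  then show ?thesis using compact_imp_bounded[OF K(1)] by (auto intro: bounded_subset)
qed

end

context finite_borel_measure
begin

lemma exists_subseq_convergent_at_atoms:
  fixes F :: "nat \<Rightarrow> real \<Rightarrow> 'b::heine_borel"
  assumes "\<And>\<epsilon>. 0 < \<epsilon> \<Longrightarrow> \<exists>K. compact K \<and> (\<forall>n. measure M {x. F n x \<notin> K} < \<epsilon>)"
    and "\<And>n. F n \<in> borel_measurable borel"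
  shows "\<exists>r. strict_mono r \<and> (\<forall>a. measure M {a} \<noteq> 0 \<longrightarrow> convergent (\<lambda>n. F (r n) a))"
proof -
  have "bounded (range (\<lambda>n. F n a))" if "a \<in> {a. measure M {a} \<noteq> 0}" for a
  proof (rule bounded_range_at_atom)
    show "0 < measure M {a}" using that by (simp add: zero_less_measure_iff)
  qed (use assms in \<open>auto simp: borel_UNIV measurable_cong_sets[OF M_is_borel refl]\<close>)
  then show ?thesis
    using countable_bounded_common_convergent_subseq[OF countable_support] by blast
qed

lemma atomless_cube_seq_diffuse_part:
  fixes F :: "nat \<Rightarrow> real \<Rightarrow> real^'d::finite"
  assumes tight: "\<And>\<epsilon>. 0 < \<epsilon> \<Longrightarrow> \<exists>K. compact K \<and> (\<forall>n. measure M {x. F n x \<notin> K} < \<epsilon>)"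
    and F[measurable]: "\<And>n. F n \<in> borel_measurable borel"
  shows "atomless_cube_seq (density M (indicator {x. measure M {x} = 0})) (\<lambda>n x. squash_vec (F n x))"
proof (rule atomless_cube_seq.intro)
  define D where "D = {x. measure M {x} = 0}"
  have "UNIV - D = {x. measure M {x} \<noteq> 0}" unfolding D_def by auto
  then have "UNIV - D \<in> sets borel" using countable_support by (auto intro: sets.countable)
  then have D: "D \<in> sets M"
    by (metis M_is_borel Diff_Diff_Int Int_UNIV_left sets.Diff sets.top space_borel)
  have restricted: "measure (density M (indicator D)) X = measure M (D \<inter> X)" if "X \<in> sets borel" for X
    using that D by (intro measure_restricted) (auto simp: M_is_borel)
  show "finite_borel_measure (density M (indicator {x. measure M {x} = 0}))"
    unfolding D_def[symmetric]
    by (intro finite_borel_measure.intro finite_borel_measure_axioms.intro finite_measure_restricted D)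
      (simp add: M_is_borel)
  show "measure (density M (indicator {x. measure M {x} = 0})) {x} = 0" for x
    using restricted[of "{x}"] by (cases "x \<in> D") (auto simp: D_def)
  show "(\<lambda>x. squash_vec (F n x)) \<in> borel_measurable borel" for n by measurable
  show "squash_vec (F n x) \<in> unit_cube" for n x by (rule squash_vec_in_unit_cube)
  fix \<epsilon> :: real assume "0 < \<epsilon>"
  then obtain K where K: "compact K" "\<And>n. measure M {x. F n x \<notin> K} < \<epsilon>" using tight by blast
  then obtain R where R: "\<And>x. x \<in> K \<Longrightarrow> norm x \<le> R" using compact_imp_bounded bounded_iff by metis
  have "measure (density M (indicator D)) {x. squash_vec (F n x) \<notin> inner_cube (squash (-R))} < \<epsilon>" for n
  proof -
    have "{x. squash_vec (F n x) \<notin> inner_cube (squash (-R))} \<subseteq> {x. F n x \<notin> K}"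
      using squash_vec_in_inner_cube R by blast
    moreover have "{x. F n x \<notin> K} \<in> sets M"
      using measurable_sets[OF F borel_open[OF open_Compl[OF compact_imp_closed[OF K(1)]]]]
      by (simp add: vimage_def Compl_eq M_is_borel)
    ultimately have "measure M (D \<inter> {x. squash_vec (F n x) \<notin> inner_cube (squash (-R))})
        \<le> measure M {x. F n x \<notin> K}"
      by (intro finite_measure_mono) auto
    then show ?thesis
      using K(2)[of n] restricted[of "{x. squash_vec (F n x) \<notin> inner_cube (squash (-R))}"]
      unfolding inner_cube_eq_cbox by simp
  qed
  then show "\<exists>\<delta>>0. \<forall>n. measure (density M (indicator {x. measure M {x} = 0}))
      {x. squash_vec (F n x) \<notin> inner_cube \<delta>} < \<epsilon>"
    using squash_bounds(1) unfolding D_def by blast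
qed

end

lemma (in finite_borel_measure) exists_subseq_pushforward_limit:
  fixes F :: "nat \<Rightarrow> real \<Rightarrow> real^'d::finite"
  assumes tight: "\<And>\<epsilon>. 0 < \<epsilon> \<Longrightarrow> \<exists>K. compact K \<and> (\<forall>n. measure M {x. F n x \<notin> K} < \<epsilon>)"
    and F[measurable]: "\<And>n. F n \<in> borel_measurable borel"
  shows "\<exists>r G. strict_mono r \<and> G \<in> borel_measurable borel \<and>
    (\<forall>f::real^'d \<Rightarrow> real. continuous_on UNIV f \<longrightarrow> bounded (range f) \<longrightarrow>
      (\<lambda>n. \<integral>x. f (F (r n) x) \<partial>M) \<longlonglongrightarrow> (\<integral>x. f (G x) \<partial>M))"
proof -
  define D where "D = {x. measure M {x} = 0}"
  have atoms: "UNIV - D = {x. measure M {x} \<noteq> 0}" unfolding D_def by auto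
  then have atoms_borel[measurable]: "UNIV - D \<in> sets borel"
    using countable_support by (auto intro: sets.countable)
  then have D_borel[measurable]: "D \<in> sets borel"
    using sets.compl_sets[OF atoms_borel] by (simp add: Diff_Diff_Int)
  obtain r0 where r0: "strict_mono r0" "\<And>a. a \<in> UNIV - D \<Longrightarrow> convergent (\<lambda>n. F (r0 n) a)"
    using exists_subseq_convergent_at_atoms[OF tight F] atoms by blast
  have "\<exists>K. compact K \<and> (\<forall>n. measure M {x. F (r0 n) x \<notin> K} < \<epsilon>)" if "0 < \<epsilon>" for \<epsilon>
    using tight[OF that] by blast
  then interpret diffuse: atomless_cube_seq "density M (indicator D)" "\<lambda>n x. squash_vec (F (r0 n) x)"
    unfolding D_def by (intro atomless_cube_seq_diffuse_part) auto
  obtain r1 \<Psi> where r1: "strict_mono r1" and \<Psi>[measurable]: "\<Psi> \<in> borel_measurable borel"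
    and diffuse_lim: "\<And>(g :: real^'d \<Rightarrow> real) B. continuous_on unit_cube g \<Longrightarrow>
      (\<forall>y. \<bar>g y\<bar> \<le> B) \<Longrightarrow> g \<in> borel_measurable borel \<Longrightarrow>
      (\<lambda>n. \<integral>x. g (squash_vec (F (r0 (r1 n)) x)) \<partial>density M (indicator D)) \<longlonglongrightarrow>
      (\<integral>x. g (\<Psi> x) \<partial>density M (indicator D))"
    using diffuse.exists_subseq_integral_tendsto by blast
  define G where "G x = (if x \<in> UNIV - D then lim (\<lambda>n. F (r0 n) x) else unsquash_vec (\<Psi> x))" for x
  have G[measurable]: "G \<in> borel_measurable borel"
    unfolding G_def using countable_support atoms by (intro borel_measurable_if_countable) auto
  have "space M - (UNIV - D) = D" by (auto simp: borel_UNIV)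
  have lim: "(\<lambda>n. \<integral>x. f (F (r0 (r1 n)) x) \<partial>M) \<longlonglongrightarrow> (\<integral>x. f (G x) \<partial>M)"
    if f: "continuous_on UNIV f" "bounded (range f)" for f :: "real^'d \<Rightarrow> real"
  proof -
    obtain B where B: "\<And>y. \<bar>f y\<bar> \<le> B" using f(2) unfolding bounded_iff by auto
    have [measurable]: "f \<in> borel_measurable borel" using f(1) by (rule borel_measurable_continuous_onI)
    show ?thesis
    proof (rule integral_tendsto_split_density[of "UNIV - D" _ _ B])
      show "\<bar>f (F (r0 (r1 n)) x)\<bar> \<le> B" "\<bar>f (G x)\<bar> \<le> B" for n x by (fact B)+
      show "(\<lambda>n. f (F (r0 (r1 n)) a)) \<longlonglongrightarrow> f (G a)" if "a \<in> UNIV - D" for a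
      proof -
        have "(\<lambda>n. F (r0 (r1 n)) a) \<longlonglongrightarrow> lim (\<lambda>n. F (r0 n) a)"
          using LIMSEQ_subseq_LIMSEQ[OF convergent_LIMSEQ_iff[THEN iffD1, OF r0(2)[OF that]] r1]
          by (simp add: o_def)
        then show ?thesis
          using f(1) that
          by (auto simp: G_def continuous_on_eq_continuous_at intro: isCont_tendsto_compose)
      qed
      have "(\<integral>x. f (G x) \<partial>density M (indicator D)) =
          (\<integral>x. f (unsquash_vec (\<Psi> x)) \<partial>density M (indicator D))"
        by (rule integral_density_indicator_cong)
          (simp_all add: M_is_borel measurable_cong_sets[OF M_is_borel refl] G_def)
      moreover have "(\<lambda>n. \<integral>x. f (F (r0 (r1 n)) x) \<partial>density M (indicator D)) \<longlonglongrightarrow> \<dots>"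
        using diffuse_lim[of "f \<circ> unsquash_vec" B] B
          continuous_on_compose2[OF f(1) continuous_on_unsquash_vec] by (simp add: o_def)
      ultimately show "(\<lambda>n. \<integral>x. f (F (r0 (r1 n)) x) \<partial>density M (indicator (space M - (UNIV - D)))) \<longlonglongrightarrow>
          (\<integral>x. f (G x) \<partial>density M (indicator (space M - (UNIV - D))))"
        unfolding \<open>space M - (UNIV - D) = D\<close> by simp
    qed (auto simp: M_is_borel measurable_cong_sets[OF M_is_borel refl])
  qed
  show ?thesis
    by (intro exI[of _ "r0 \<circ> r1"] exI[of _ G] conjI strict_mono_o[OF r0(1) r1] G allI impI)
      (simp add: lim)
qed

lemma tight_seq_distrD:
  fixes F :: "nat \<Rightarrow> 'a \<Rightarrow> 'b::t2_space"
  assumes "tight_seq (\<lambda>n. distr M borel (F n))" "\<And>n. F n \<in> borel_measurable M" "0 < \<epsilon>"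
  shows "\<exists>K. compact K \<and> (\<forall>n. measure M {x\<in>space M. F n x \<notin> K} < \<epsilon>)"
proof -
  obtain K where K: "compact K" "\<And>n. measure (distr M borel (F n)) (space (distr M borel (F n)) - K) < \<epsilon>"
    using assms(1,3) unfolding tight_seq_def by blast
  have "UNIV - K \<in> sets borel" using compact_imp_closed[OF K(1)] by (auto intro: borel_open)
  then have "measure (distr M borel (F n)) (space (distr M borel (F n)) - K) =
      measure M {x\<in>space M. F n x \<notin> K}"
    for n using assms(2) by (simp add: measure_distr vimage_def Int_def conj_commute)
  then show ?thesis using K by auto
qed

lemma weak_conv_seq_distrI:
  fixes F :: "nat \<Rightarrow> 'a \<Rightarrow> 'b::topological_space"
  assumes "\<And>n. F n \<in> borel_measurable M" "G \<in> borel_measurable M"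
    and "\<And>f :: 'b \<Rightarrow> real. continuous_on UNIV f \<Longrightarrow> bounded (range f) \<Longrightarrow>
      (\<lambda>n. \<integral>x. f (F n x) \<partial>M) \<longlonglongrightarrow> (\<integral>x. f (G x) \<partial>M)"
  shows "weak_conv_seq (\<lambda>n. distr M borel (F n)) (distr M borel G)"
  unfolding weak_conv_seq_def
  using assms by (auto simp: integral_distr borel_measurable_continuous_onI)

theorem mainTheorem10:
  fixes \<mu> :: "real measure" and Fs :: "nat \<Rightarrow> real \<Rightarrow> real ^ 'd"
  assumes "prob_space \<mu>" and "sets \<mu> = sets borel"
    and "\<And>n. Fs n \<in> borel_measurable \<mu>"
    and "tight_seq (\<lambda>n. distr \<mu> borel (Fs n))"
  shows "\<exists>r F. strict_mono r \<and> F \<in> borel_measurable \<mu> \<and>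
           weak_conv_seq (\<lambda>n. distr \<mu> borel (Fs (r n))) (distr \<mu> borel F)"
proof -
  interpret prob_space \<mu> by fact
  interpret finite_borel_measure \<mu> by unfold_locales fact
  have measurable_eq: "measurable \<mu> N = measurable borel N" for N :: "'b measure"
    by (rule measurable_cong_sets[OF assms(2) refl])
  have Fs: "Fs n \<in> borel_measurable borel" for n
    using assms(3) unfolding measurable_eq .
  have tight: "\<exists>K. compact K \<and> (\<forall>n. measure \<mu> {x. Fs n x \<notin> K} < \<epsilon>)" if "0 < \<epsilon>" for \<epsilon>
    using tight_seq_distrD[OF assms(4,3) that] by (simp add: borel_UNIV)
  obtain r F where "strict_mono r" "F \<in> borel_measurable borel"
    and "\<forall>f :: real^'d \<Rightarrow> real. continuous_on UNIV f \<longrightarrow> bounded (range f) \<longrightarrow>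
      (\<lambda>n. \<integral>x. f (Fs (r n) x) \<partial>\<mu>) \<longlonglongrightarrow> (\<integral>x. f (F x) \<partial>\<mu>)"
    using exists_subseq_pushforward_limit[OF tight Fs] by blast
  then show ?thesis
    by (intro exI[of _ r] exI[of _ F] conjI weak_conv_seq_distrI) (auto simp: measurable_eq Fs)
qed

end
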